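(* Let $\varphi(u_x,u_y)$, not identically zero, be the generating section of a contact symmetry of the two-dimensional minimal surface equation $(1+u_y^2)u_{xx}-2u_xu_yu_{xy}+(1+u_x^2)u_{yy}=0$, and let $\Sigma=\{z=u(x,y)\}$ be a minimal surface given by a solution $u$ of this equation which is invariant with respect to $\varphi$, i.e. $\varphi(u_x,u_y)=0$ along $u$. Then $\Sigma$ is a plane.
   Context: A contact symmetry of $\{F=0\}$ is given by a generating section $\varphi$ satisfying $\ell_F(\varphi)=0$ on the infinite prolongation of the equation; a solution is invariant with respect to $\varphi$ if $\varphi$ vanishes when evaluated on the solution's jets. *)

theory Defs
  imports "HOL-Analysis.Analysis"
begin

definition dP :: "(real \<times> real \<Rightarrow> real) \<Rightarrow> real \<times> real \<Rightarrow> real" where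
  "dP f z = deriv (\<lambda>t. f (t, snd z)) (fst z)"

definition dQ :: "(real \<times> real \<Rightarrow> real) \<Rightarrow> real \<times> real \<Rightarrow> real" where
  "dQ f z = deriv (\<lambda>t. f (fst z, t)) (snd z)"

text \<open>C-infinity on an open set S of the plane: there is a family D i j of all
  iterated partial derivatives (D 0 0 = f on S), each Frechet differentiable on S
  with the expected partial derivatives.\<close>
definition smooth_on_R2 :: "(real \<times> real) set \<Rightarrow> (real \<times> real \<Rightarrow> real) \<Rightarrow> bool" where
  "smooth_on_R2 S f \<longleftrightarrow>
     (\<exists>D :: nat \<Rightarrow> nat \<Rightarrow> real \<times> real \<Rightarrow> real.
        (\<forall>z\<in>S. D 0 0 z = f z) \<and>
        (\<forall>i j. \<forall>z\<in>S. (D i j has_derivative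
              (\<lambda>(h, k). D (Suc i) j z * h + D i (Suc j) z * k)) (at z)))"

text \<open>Minimal surface equation F(p,q,r,s,t) with p = u_x, q = u_y, r = u_xx, s = u_xy, t = u_yy.\<close>
definition MSE :: "real \<Rightarrow> real \<Rightarrow> real \<Rightarrow> real \<Rightarrow> real \<Rightarrow> real" where
  "MSE p q r s t = (1 + q^2) * r - 2 * p * q * s + (1 + p^2) * t"

text \<open>Total derivatives D_x F and D_y F; a = u_xxx, b = u_xxy, c = u_xyy, d = u_yyy.\<close>
definition DxMSE :: "real \<Rightarrow> real \<Rightarrow> real \<Rightarrow> real \<Rightarrow> real \<Rightarrow> real \<Rightarrow> real \<Rightarrow> real \<Rightarrow> real" where
  "DxMSE p q r s t a b c = 2 * q * s * r + (1 + q^2) * a - 2 * (r * q + p * s) * s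
      - 2 * p * q * b + 2 * p * r * t + (1 + p^2) * c"

definition DyMSE :: "real \<Rightarrow> real \<Rightarrow> real \<Rightarrow> real \<Rightarrow> real \<Rightarrow> real \<Rightarrow> real \<Rightarrow> real \<Rightarrow> real" where
  "DyMSE p q r s t b c d = 2 * q * t * r + (1 + q^2) * b - 2 * (s * q + p * t) * s
      - 2 * p * q * c + 2 * p * s * t + (1 + p^2) * d"

text \<open>The linearization (universal linearization) ell_F applied to the section phi(u_x,u_y),
  written out at a point (p,q,r,s,t,a,b,c,d) of the third-order jet space:
  ell_F(psi) = (1+q^2) D_x^2 psi - 2pq D_x D_y psi + (1+p^2) D_y^2 psi
               + (2pt - 2qs) D_x psi + (2qr - 2ps) D_y psi.\<close>
definition lin_MSE :: "(real \<times> real \<Rightarrow> real) \<Rightarrow> real \<Rightarrow> real \<Rightarrow> real \<Rightarrow> real \<Rightarrow> real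
    \<Rightarrow> real \<Rightarrow> real \<Rightarrow> real \<Rightarrow> real \<Rightarrow> real" where
  "lin_MSE \<phi> p q r s t a b c d =
    (let z = (p, q);
         fp = dP \<phi> z; fq = dQ \<phi> z;
         fpp = dP (dP \<phi>) z; fpq = dQ (dP \<phi>) z; fqq = dQ (dQ \<phi>) z;
         Dx = fp * r + fq * s;
         Dy = fp * s + fq * t;
         Dxx = fpp * r^2 + 2 * fpq * r * s + fqq * s^2 + fp * a + fq * b;
         Dxy = fpp * r * s + fpq * (r * t + s^2) + fqq * s * t + fp * b + fq * c;
         Dyy = fpp * s^2 + 2 * fpq * s * t + fqq * t^2 + fp * c + fq * d
     in (1 + q^2) * Dxx - 2 * p * q * Dxy + (1 + p^2) * Dyy
        + (2 * p * t - 2 * q * s) * Dx + (2 * q * r - 2 * p * s) * Dy)"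

text \<open>phi(u_x,u_y) generates a contact symmetry: ell_F(phi) = 0 on the (order 3 part of the)
  infinite prolongation, i.e. wherever F = D_x F = D_y F = 0.\<close>
definition is_MSE_symmetry :: "(real \<times> real \<Rightarrow> real) \<Rightarrow> bool" where
  "is_MSE_symmetry \<phi> \<longleftrightarrow>
     (\<forall>p q r s t a b c d.
        MSE p q r s t = 0 \<and> DxMSE p q r s t a b c = 0 \<and> DyMSE p q r s t b c d = 0
        \<longrightarrow> lin_MSE \<phi> p q r s t a b c d = 0)"

end

(*
  Substituting suitable third-order jets into the symmetry condition shows that the generating
  function solves (1 + p^2) phi_pp + 2 p q phi_pq + (1 + q^2) phi_qq = 0. If the Hessian of u
  vanishes identically, u is affine. Otherwise the minimal surface equation makes the Hessian
  nondegenerate at some point, so the gradient of u covers an open set on which phi vanishes,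
  and unique continuation for the equation above forces phi = 0.

  Unique continuation is read off from holomorphic functions in the Poincare disc chart
  w |-> 2 w / (1 - |w|^2): a combination of the second derivatives of phi is holomorphic and
  vanishes on an open set, hence everywhere; this makes a combination of the first derivatives
  holomorphic, hence zero; and that combination is the dbar-derivative of the real function
  (1 - |w|^2) phi, which is therefore constant, hence zero.
*)

theory Submission
  imports Defs "HOL-Complex_Analysis.Complex_Analysis"
begin

section \<open>Iterated partial derivatives\<close>

type_synonym partials = "nat \<Rightarrow> nat \<Rightarrow> real \<times> real \<Rightarrow> real"

definition partials_on :: "(real \<times> real) set \<Rightarrow> (real \<times> real \<Rightarrow> real) \<Rightarrow> partials \<Rightarrow> bool"
  where "partials_on S f D \<longleftrightarrow> (\<forall>z\<in>S. D 0 0 z = f z) \<and>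
     (\<forall>i j. \<forall>z\<in>S. (D i j has_derivative (\<lambda>(h, k). D (Suc i) j z * h + D i (Suc j) z * k)) (at z))"

lemma smooth_on_R2_iff_partials_on: "smooth_on_R2 S f \<longleftrightarrow> (\<exists>D. partials_on S f D)"
  unfolding smooth_on_R2_def partials_on_def ..

lemma partials_on_subset: "partials_on S f D \<Longrightarrow> T \<subseteq> S \<Longrightarrow> partials_on T f D"
  unfolding partials_on_def by blast

lemma partials_on_eq: "partials_on S f D \<Longrightarrow> z \<in> S \<Longrightarrow> f z = D 0 0 z"
  unfolding partials_on_def by simp

lemma partials_on_has_derivative:
  "partials_on S f D \<Longrightarrow> z \<in> S \<Longrightarrow>
     (D i j has_derivative (\<lambda>(h, k). D (Suc i) j z * h + D i (Suc j) z * k)) (at z)"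
  unfolding partials_on_def by blast

lemma partials_on_has_derivative_comp:
  assumes "partials_on S f D" "g x \<in> S" "(g has_derivative g') (at x within T)"
  shows "((\<lambda>x. D i j (g x)) has_derivative
      (\<lambda>v. D (Suc i) j (g x) * fst (g' v) + D i (Suc j) (g x) * snd (g' v))) (at x within T)"
proof -
  have "(D i j has_derivative (\<lambda>(h, k). D (Suc i) j (g x) * h + D i (Suc j) (g x) * k))
      (at (g x) within g ` T)"
    using partials_on_has_derivative[OF assms(1,2)] by (rule has_derivative_at_withinI)
  from diff_chain_within[OF assms(3) this] show ?thesis
    by (simp add: o_def case_prod_beta)
qed

lemma partials_on_has_real_derivative_fst:
  assumes "partials_on S f D" "(x, y) \<in> S"
  shows "((\<lambda>t. D i j (t, y)) has_real_derivative D (Suc i) j (x, y)) (at x)"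
proof -
  have "((\<lambda>t. (t, y)) has_derivative (\<lambda>h. (h, 0))) (at x)"
    by (auto intro!: derivative_eq_intros)
  from partials_on_has_derivative_comp[OF assms(1) _ this, of i j] assms(2)
  have "((\<lambda>t. D i j (t, y)) has_derivative (\<lambda>h. D (Suc i) j (x, y) * h)) (at x)"
    by simp
  then show ?thesis by (simp add: has_field_derivative_def)
qed

lemma partials_on_has_real_derivative_snd:
  assumes "partials_on S f D" "(x, y) \<in> S"
  shows "((\<lambda>t. D i j (x, t)) has_real_derivative D i (Suc j) (x, y)) (at y)"
proof -
  have "((\<lambda>t. (x, t)) has_derivative (\<lambda>h. (0, h))) (at y)"
    by (auto intro!: derivative_eq_intros)
  from partials_on_has_derivative_comp[OF assms(1) _ this, of i j] assms(2)
  have "((\<lambda>t. D i j (x, t)) has_derivative (\<lambda>h. D i (Suc j) (x, y) * h)) (at y)"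
    by simp
  then show ?thesis by (simp add: has_field_derivative_def)
qed

lemma open_slice_fst:
  assumes "open (S :: (real \<times> real) set)"
  shows "open {t. (t, y) \<in> S}"
proof -
  have "open ((\<lambda>t. (t, y)) -` S)"
    by (rule continuous_open_vimage[OF assms]) (intro continuous_intros)
  then show ?thesis by (simp add: vimage_def)
qed

lemma open_slice_snd:
  assumes "open (S :: (real \<times> real) set)"
  shows "open {t. (x, t) \<in> S}"
proof -
  have "open ((\<lambda>t. (x, t)) -` S)"
    by (rule continuous_open_vimage[OF assms]) (intro continuous_intros)
  then show ?thesis by (simp add: vimage_def)
qed

lemma dP_eq_partial:
  assumes "partials_on S f D" "open S" "z \<in> S" "\<And>y. y \<in> S \<Longrightarrow> g y = D i j y"
  shows "dP g z = D (Suc i) j z"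
proof -
  obtain x y where z: "z = (x, y)" by (cases z)
  have "((\<lambda>t. D i j (t, y)) has_real_derivative D (Suc i) j z) (at x)"
    using partials_on_has_real_derivative_fst[OF assms(1), of x y i j] assms(3) z by simp
  then have "((\<lambda>t. g (t, y)) has_real_derivative D (Suc i) j z) (at x)"
    by (rule has_field_derivative_transform_within_open[OF _ open_slice_fst[OF assms(2)]])
      (use assms z in auto)
  then show ?thesis unfolding dP_def z by (simp add: DERIV_imp_deriv)
qed

lemma dQ_eq_partial:
  assumes "partials_on S f D" "open S" "z \<in> S" "\<And>y. y \<in> S \<Longrightarrow> g y = D i j y"
  shows "dQ g z = D i (Suc j) z"
proof -
  obtain x y where z: "z = (x, y)" by (cases z)
  have "((\<lambda>t. D i j (x, t)) has_real_derivative D i (Suc j) z) (at y)"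
    using partials_on_has_real_derivative_snd[OF assms(1), of x y i j] assms(3) z by simp
  then have "((\<lambda>t. g (x, t)) has_real_derivative D i (Suc j) z) (at y)"
    by (rule has_field_derivative_transform_within_open[OF _ open_slice_snd[OF assms(2)]])
      (use assms z in auto)
  then show ?thesis unfolding dQ_def z by (simp add: DERIV_imp_deriv)
qed

lemma partials_on_second_order:
  assumes "partials_on S f D" "open S" "z \<in> S"
  shows "dP f z = D 1 0 z" "dQ f z = D 0 1 z" "dP (dP f) z = D 2 0 z"
    "dQ (dP f) z = D 1 1 z" "dQ (dQ f) z = D 0 2 z"
proof -
  have f: "\<And>y. y \<in> S \<Longrightarrow> f y = D 0 0 y" using partials_on_eq[OF assms(1)] .
  have fP: "\<And>y. y \<in> S \<Longrightarrow> dP f y = D 1 0 y" using dP_eq_partial[OF assms(1,2) _ f] by simp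
  have fQ: "\<And>y. y \<in> S \<Longrightarrow> dQ f y = D 0 1 y" using dQ_eq_partial[OF assms(1,2) _ f] by simp
  show "dP f z = D 1 0 z" "dQ f z = D 0 1 z" using fP fQ assms(3) by simp_all
  show "dP (dP f) z = D 2 0 z" using dP_eq_partial[OF assms fP] by (simp add: numeral_2_eq_2)
  show "dQ (dP f) z = D 1 1 z" using dQ_eq_partial[OF assms fP] by simp
  show "dQ (dQ f) z = D 0 2 z" using dQ_eq_partial[OF assms fQ] by (simp add: numeral_2_eq_2)
qed

lemma partials_on_vanish_Suc:
  assumes "partials_on S f D" "open V" "V \<subseteq> S" "z \<in> V" "\<And>y. y \<in> V \<Longrightarrow> D i j y = 0"
  shows "D (Suc i) j z = 0" "D i (Suc j) z = 0"
proof -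
  have D: "partials_on V f D" using partials_on_subset[OF assms(1,3)] .
  have "dP (\<lambda>_. 0) z = D (Suc i) j z" "dQ (\<lambda>_. 0) z = D i (Suc j) z"
    using dP_eq_partial[OF D assms(2,4), of "\<lambda>_. 0"] dQ_eq_partial[OF D assms(2,4), of "\<lambda>_. 0"]
      assms(5) by simp_all
  then show "D (Suc i) j z = 0" "D i (Suc j) z = 0" by (simp_all add: dP_def dQ_def)
qed

lemma partials_on_vanish:
  assumes "partials_on S f D" "open V" "V \<subseteq> S" "\<And>z. z \<in> V \<Longrightarrow> f z = 0" "z \<in> V"
  shows "D i j z = 0"
proof -
  note vanish_Suc = partials_on_vanish_Suc[OF assms(1-3)]
  have "\<forall>z\<in>V. D i 0 z = 0"
    by (induction i) (use assms(3,4) partials_on_eq[OF assms(1)] vanish_Suc(1) in \<open>auto simp: subset_iff\<close>)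
  then have "\<forall>z\<in>V. D i j z = 0"
    by (induction j) (use vanish_Suc(2) in blast)+
  with assms(5) show ?thesis by blast
qed

section \<open>The equation for the generating function\<close>

definition symmetry_pde :: "partials \<Rightarrow> bool" where
  "symmetry_pde D \<longleftrightarrow>
     (\<forall>p q. (1 + p^2) * D 2 0 (p, q) + 2 * p * q * D 1 1 (p, q) + (1 + q^2) * D 0 2 (p, q) = 0)"

text \<open>The jet with \<open>(r, s, t) = (1 + p^2, 0, -(1 + q^2))\<close> and third derivatives chosen to
  solve \<open>D_x F = D_y F = 0\<close> kills every term of \<open>\<ell>_F(\<phi>)\<close> except the second-order one.\<close>

lemma is_MSE_symmetry_imp_symmetry_pde:
  assumes "partials_on UNIV \<phi> D" "is_MSE_symmetry \<phi>"
  shows "symmetry_pde D"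
  unfolding symmetry_pde_def
proof (intro allI)
  fix p q :: real
  let ?A = "1 + q^2" and ?B = "1 + p^2"
  have "MSE p q ?B 0 (- ?A) = 0" "DxMSE p q ?B 0 (- ?A) (2 * p * ?B) 0 0 = 0"
    "DyMSE p q ?B 0 (- ?A) 0 0 (2 * q * ?A) = 0"
    unfolding MSE_def DxMSE_def DyMSE_def by (simp_all add: algebra_simps)
  then have "lin_MSE \<phi> p q ?B 0 (- ?A) (2 * p * ?B) 0 0 (2 * q * ?A) = 0"
    using assms(2) unfolding is_MSE_symmetry_def by blast
  moreover have "lin_MSE \<phi> p q ?B 0 (- ?A) (2 * p * ?B) 0 0 (2 * q * ?A) =
      ?A * ?B * (?B * D 2 0 (p, q) + 2 * p * q * D 1 1 (p, q) + ?A * D 0 2 (p, q))"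
    unfolding lin_MSE_def Let_def partials_on_second_order[OF assms(1) open_UNIV UNIV_I]
    by (simp add: algebra_simps power2_eq_square)
  moreover have "?A > 0" "?B > 0" by (simp_all add: add_pos_nonneg)
  ultimately show "?B * D 2 0 (p, q) + 2 * p * q * D 1 1 (p, q) + ?A * D 0 2 (p, q) = 0"
    by simp
qed

lemma symmetry_pde_derivatives:
  assumes "partials_on UNIV \<phi> D" "symmetry_pde D"
  shows "2 * p * D 2 0 (p, q) + (1 + p^2) * D 3 0 (p, q) + 2 * q * D 1 1 (p, q)
           + 2 * p * q * D 2 1 (p, q) + (1 + q^2) * D 1 2 (p, q) = 0"
    and "(1 + p^2) * D 2 1 (p, q) + 2 * p * D 1 1 (p, q) + 2 * p * q * D 1 2 (p, q)
           + 2 * q * D 0 2 (p, q) + (1 + q^2) * D 0 3 (p, q) = 0"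
proof -
  note pde = assms(2)[unfolded symmetry_pde_def, rule_format]
  have dx: "((\<lambda>t. D i j (t, q)) has_real_derivative D (Suc i) j (p, q)) (at p)" for i j
    using partials_on_has_real_derivative_fst[OF assms(1)] by simp
  have dy: "((\<lambda>t. D i j (p, t)) has_real_derivative D i (Suc j) (p, q)) (at q)" for i j
    using partials_on_has_real_derivative_snd[OF assms(1)] by simp
  have "((\<lambda>t. (1 + t^2) * D 2 0 (t, q) + 2 * t * q * D 1 1 (t, q) + (1 + q^2) * D 0 2 (t, q))
      has_real_derivative
        (2 * p * D 2 0 (p, q) + (1 + p^2) * D 3 0 (p, q) + 2 * q * D 1 1 (p, q)
           + 2 * p * q * D 2 1 (p, q) + (1 + q^2) * D 1 2 (p, q))) (at p)"
    using dx[of 2 0] dx[of 1 1] dx[of 0 2]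
    by (auto intro!: derivative_eq_intros simp: numeral_3_eq_3 numeral_2_eq_2 algebra_simps)
  then show "2 * p * D 2 0 (p, q) + (1 + p^2) * D 3 0 (p, q) + 2 * q * D 1 1 (p, q)
           + 2 * p * q * D 2 1 (p, q) + (1 + q^2) * D 1 2 (p, q) = 0"
    by (rule DERIV_unique) (simp only: pde DERIV_const)
  have "((\<lambda>t. (1 + p^2) * D 2 0 (p, t) + 2 * p * t * D 1 1 (p, t) + (1 + t^2) * D 0 2 (p, t))
      has_real_derivative
        ((1 + p^2) * D 2 1 (p, q) + 2 * p * D 1 1 (p, q) + 2 * p * q * D 1 2 (p, q)
           + 2 * q * D 0 2 (p, q) + (1 + q^2) * D 0 3 (p, q))) (at q)"
    using dy[of 2 0] dy[of 1 1] dy[of 0 2]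
    by (auto intro!: derivative_eq_intros simp: numeral_3_eq_3 numeral_2_eq_2 algebra_simps)
  then show "(1 + p^2) * D 2 1 (p, q) + 2 * p * D 1 1 (p, q) + 2 * p * q * D 1 2 (p, q)
           + 2 * q * D 0 2 (p, q) + (1 + q^2) * D 0 3 (p, q) = 0"
    by (rule DERIV_unique) (simp only: pde DERIV_const)
qed

section \<open>Wirtinger derivatives\<close>

text \<open>\<open>c\<close> is the Wirtinger derivative \<open>(f_x + i f_y) / 2\<close> of \<open>f\<close> at \<open>w\<close>.\<close>

definition has_dbar :: "(complex \<Rightarrow> complex) \<Rightarrow> complex \<Rightarrow> complex \<Rightarrow> bool" where
  "has_dbar f w c \<longleftrightarrow> (\<exists>f'. (f has_derivative f') (at w) \<and> f' 1 + \<i> * f' \<i> = 2 * c)"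

lemma has_dbarI: "(f has_derivative f') (at w) \<Longrightarrow> f' 1 + \<i> * f' \<i> = 2 * c \<Longrightarrow> has_dbar f w c"
  unfolding has_dbar_def by blast

lemma has_dbarE:
  assumes "has_dbar f w c"
  obtains f' where "(f has_derivative f') (at w)" "f' 1 + \<i> * f' \<i> = 2 * c"
  using assms unfolding has_dbar_def by blast

lemma has_dbar_eq: "has_dbar f w c \<Longrightarrow> c = d \<Longrightarrow> has_dbar f w d"
  by simp

lemma has_dbar_const: "has_dbar (\<lambda>z. k) w 0"
  by (rule has_dbarI[OF has_derivative_const]) simp

lemma has_dbar_ident: "has_dbar (\<lambda>z. z) w 0"
  by (rule has_dbarI[OF has_derivative_ident]) simp

lemma has_dbar_cnj: "has_dbar (\<lambda>z. cnj z) w 1"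
  by (rule has_dbarI[OF has_derivative_cnj[OF has_derivative_ident]]) simp

lemma has_dbar_add:
  assumes "has_dbar f w a" "has_dbar g w b"
  shows "has_dbar (\<lambda>z. f z + g z) w (a + b)"
proof -
  obtain f' g' where f: "(f has_derivative f') (at w)" "f' 1 + \<i> * f' \<i> = 2 * a"
    and g: "(g has_derivative g') (at w)" "g' 1 + \<i> * g' \<i> = 2 * b"
    using assms by (elim has_dbarE)
  show ?thesis
    by (rule has_dbarI[OF has_derivative_add[OF f(1) g(1)]]) (use f(2) g(2) in algebra)
qed

lemma has_dbar_diff:
  assumes "has_dbar f w a" "has_dbar g w b"
  shows "has_dbar (\<lambda>z. f z - g z) w (a - b)"
proof -
  obtain f' g' where f: "(f has_derivative f') (at w)" "f' 1 + \<i> * f' \<i> = 2 * a"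
    and g: "(g has_derivative g') (at w)" "g' 1 + \<i> * g' \<i> = 2 * b"
    using assms by (elim has_dbarE)
  show ?thesis
    by (rule has_dbarI[OF has_derivative_diff[OF f(1) g(1)]]) (use f(2) g(2) in algebra)
qed

lemma has_dbar_minus:
  assumes "has_dbar f w a"
  shows "has_dbar (\<lambda>z. - f z) w (- a)"
proof -
  obtain f' where f: "(f has_derivative f') (at w)" "f' 1 + \<i> * f' \<i> = 2 * a"
    using assms by (elim has_dbarE)
  show ?thesis
    by (rule has_dbarI[OF has_derivative_minus[OF f(1)]]) (use f(2) in algebra)
qed

lemma has_dbar_mult:
  assumes "has_dbar f w a" "has_dbar g w b"
  shows "has_dbar (\<lambda>z. f z * g z) w (f w * b + a * g w)"
proof -
  obtain f' g' where f: "(f has_derivative f') (at w)" "f' 1 + \<i> * f' \<i> = 2 * a"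
    and g: "(g has_derivative g') (at w)" "g' 1 + \<i> * g' \<i> = 2 * b"
    using assms by (elim has_dbarE)
  show ?thesis
    by (rule has_dbarI[OF has_derivative_mult[OF f(1) g(1)]]) (use f(2) g(2) in algebra)
qed

lemma has_dbar_power:
  assumes "has_dbar f w a"
  shows "has_dbar (\<lambda>z. f z ^ n) w (of_nat n * f w ^ (n - 1) * a)"
proof -
  obtain f' where f: "(f has_derivative f') (at w)" "f' 1 + \<i> * f' \<i> = 2 * a"
    using assms by (elim has_dbarE)
  have "of_nat n * f' 1 * f w ^ (n - 1) + \<i> * (of_nat n * f' \<i> * f w ^ (n - 1))
      = of_nat n * f w ^ (n - 1) * (f' 1 + \<i> * f' \<i>)"
    by (simp add: algebra_simps)
  then show ?thesis
    using f(2) by (intro has_dbarI[OF has_derivative_power[OF f(1)]]) simp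
qed

lemma has_dbar_inverse:
  assumes "has_dbar g w b" "g w \<noteq> 0"
  shows "has_dbar (\<lambda>z. inverse (g z)) w (- b / (g w)^2)"
proof -
  obtain g' where d: "(g has_derivative g') (at w)" and e: "g' 1 + \<i> * g' \<i> = 2 * b"
    using assms(1) by (elim has_dbarE)
  have "- (inverse (g w) * g' 1 * inverse (g w)) + \<i> * - (inverse (g w) * g' \<i> * inverse (g w))
      = - (g' 1 + \<i> * g' \<i>) / (g w)^2"
    using assms(2) by (simp add: field_simps power2_eq_square)
  then show ?thesis
    using e by (intro has_dbarI[OF Deriv.has_derivative_inverse[OF assms(2) d]]) simp
qed

lemma has_dbar_divide:
  assumes "has_dbar f w a" "has_dbar g w b" "g w \<noteq> 0"
  shows "has_dbar (\<lambda>z. f z / g z) w ((a * g w - f w * b) / (g w)^2)"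
proof -
  have "has_dbar (\<lambda>z. f z * inverse (g z)) w (f w * (- b / (g w)^2) + a * inverse (g w))"
    using assms by (intro has_dbar_mult has_dbar_inverse)
  moreover have "f w * (- b / (g w)^2) + a * inverse (g w) = (a * g w - f w * b) / (g w)^2"
    using assms(3) by (simp add: field_simps power2_eq_square)
  ultimately show ?thesis by (simp add: divide_inverse)
qed

lemma linear_complex_eq:
  assumes "linear f"
  shows "f h = Re h *\<^sub>R f 1 + Im h *\<^sub>R f \<i>"
proof -
  have "h = Re h *\<^sub>R 1 + Im h *\<^sub>R \<i>" by (simp add: complex_eq_iff)
  then have "f h = f (Re h *\<^sub>R 1 + Im h *\<^sub>R \<i>)" by simp
  then show ?thesis using assms by (simp add: linear_add linear_scale)
qed

lemma has_dbar_zero_imp_field_differentiable: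
  assumes "has_dbar f w 0"
  shows "f field_differentiable (at w)"
proof -
  obtain f' where d: "(f has_derivative f') (at w)" and e: "f' 1 + \<i> * f' \<i> = 0"
    using assms by (elim has_dbarE) simp
  have i: "f' \<i> = \<i> * f' 1"
    using arg_cong[OF e, of "\<lambda>x. \<i> * x"] by (simp add: algebra_simps)
  have "f' = (\<lambda>h. f' 1 * h)"
  proof
    fix h
    have "f' h = Re h *\<^sub>R f' 1 + Im h *\<^sub>R f' \<i>"
      by (rule linear_complex_eq[OF has_derivative_linear[OF d]])
    also have "\<dots> = f' 1 * (of_real (Re h) + \<i> * of_real (Im h))"
      unfolding i by (simp add: scaleR_conv_of_real algebra_simps)
    also have "\<dots> = f' 1 * h"
      by (simp flip: complex_eq)
    finally show "f' h = f' 1 * h" .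
  qed
  with d have "(f has_field_derivative f' 1) (at w)"
    unfolding has_field_derivative_def by simp
  then show ?thesis unfolding field_differentiable_def by blast
qed

lemma has_dbar_zero_imp_holomorphic_on:
  "(\<And>w. w \<in> S \<Longrightarrow> has_dbar f w 0) \<Longrightarrow> f holomorphic_on S"
  unfolding holomorphic_on_def
  using has_dbar_zero_imp_field_differentiable field_differentiable_at_within by blast

lemma has_dbar_of_real_zero_imp_has_derivative_zero:
  assumes d: "(\<psi> has_derivative \<psi>') (at w)" and z: "has_dbar (\<lambda>z. of_real (\<psi> z)) w 0"
  shows "(\<psi> has_derivative (\<lambda>h. 0)) (at w)"
proof -
  obtain f' where "((\<lambda>z. complex_of_real (\<psi> z)) has_derivative f') (at w)" "f' 1 + \<i> * f' \<i> = 0"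
    using z by (elim has_dbarE) simp
  moreover have "f' = (\<lambda>h. of_real (\<psi>' h))"
    using has_derivative_unique[OF calculation(1) has_derivative_of_real[OF d]] .
  ultimately have "\<psi>' 1 = 0" "\<psi>' \<i> = 0" by (simp_all add: complex_eq_iff)
  then have "\<psi>' h = 0" for h
    using linear_complex_eq[OF has_derivative_linear[OF d], of h] by simp
  then have "\<psi>' = (\<lambda>h. 0)" by (simp add: fun_eq_iff)
  with d show ?thesis by simp
qed

section \<open>The Poincare disc chart\<close>

text \<open>The coefficients of \<^const>\<open>symmetry_pde\<close> form the inverse of the hyperbolic metric of the
  hyperboloid written over the \<open>(p, q)\<close>-plane, and this chart is the Poincare disc model of it,
  in which the principal part of the equation becomes conformal to the Laplacian.\<close>

definition disc_chart :: "complex \<Rightarrow> real \<times> real" where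
  "disc_chart w = (2 * Re w / (1 - (cmod w)^2), 2 * Im w / (1 - (cmod w)^2))"

definition disc_partial :: "partials \<Rightarrow> nat \<Rightarrow> nat \<Rightarrow> complex \<Rightarrow> complex"
  where "disc_partial D i j w = of_real (D i j (disc_chart w))"

lemma disc_weight_pos: "w \<in> ball 0 1 \<Longrightarrow> 0 < 1 - (cmod w)^2"
  by (simp add: power_less_one_iff abs_square_less_1)

lemma of_real_disc_weight: "of_real (1 - (cmod w)^2) = 1 - w * cnj w"
  by (simp only: of_real_diff of_real_1 complex_norm_square)

lemma disc_weight_complex_nonzero: "w \<in> ball 0 1 \<Longrightarrow> 1 - w * cnj w \<noteq> 0"
  using disc_weight_pos[of w] of_real_disc_weight[of w] by (metis less_irrefl of_real_eq_0_iff)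

lemma one_plus_norm_square_nonzero: "1 + w * cnj w \<noteq> 0"
proof -
  have "of_real (1 + (cmod w)^2) = 1 + w * cnj w"
    by (simp only: of_real_add of_real_1 complex_norm_square)
  moreover have "1 + (cmod w)^2 \<noteq> 0"
    by (smt (verit) zero_le_power2)
  ultimately show ?thesis
    by (metis of_real_eq_0_iff)
qed

lemma continuous_on_disc_chart: "continuous_on (ball 0 1) disc_chart"
  unfolding disc_chart_def using disc_weight_pos
  by (intro continuous_intros) force+

lemma has_derivative_disc_chart:
  assumes "w \<in> ball 0 1"
  shows "(disc_chart has_derivative (\<lambda>v.
      ((2 * Re v * (1 - (cmod w)^2) + 4 * Re w * (Re w * Re v + Im w * Im v)) / (1 - (cmod w)^2)^2,
       (2 * Im v * (1 - (cmod w)^2) + 4 * Im w * (Re w * Re v + Im w * Im v)) / (1 - (cmod w)^2)^2)))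
    (at w)"
proof -
  have "disc_chart = (\<lambda>z. (2 * Re z / (1 - (Re z)^2 - (Im z)^2), 2 * Im z / (1 - (Re z)^2 - (Im z)^2)))"
    by (simp add: fun_eq_iff disc_chart_def cmod_power2 algebra_simps)
  then show ?thesis
    using disc_weight_pos[OF assms] unfolding cmod_power2 \<open>disc_chart = _\<close>
    by (auto intro!: derivative_eq_intros simp: field_simps power2_eq_square)
qed

lemma has_dbar_disc_partial:
  assumes "partials_on UNIV \<phi> D" "w \<in> ball 0 1"
  shows "has_dbar (disc_partial D i j) w
    ((disc_partial D (Suc i) j w * (1 + w^2) + \<i> * disc_partial D i (Suc j) w * (1 - w^2))
      / (1 - w * cnj w)^2)"
proof -
  define A where "A = D (Suc i) j (disc_chart w)"
  define B where "B = D i (Suc j) (disc_chart w)"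
  define x where "x = Re w"
  define y where "y = Im w"
  define d where "d = 1 - (cmod w)^2"
  define P where "P = A * (d + 2 * x^2) + 2 * B * x * y"
  define Q where "Q = 2 * A * x * y + B * (d + 2 * y^2)"
  define \<psi>' where "\<psi>' = (\<lambda>v.
    A * ((2 * Re v * d + 4 * x * (x * Re v + y * Im v)) / d^2) +
    B * ((2 * Im v * d + 4 * y * (x * Re v + y * Im v)) / d^2))"
  have "d \<noteq> 0" using disc_weight_pos[OF assms(2)] unfolding d_def by simp
  have d: "d = 1 - x^2 - y^2" unfolding d_def x_def y_def cmod_power2 by simp
  have deriv: "((\<lambda>z. D i j (disc_chart z)) has_derivative \<psi>') (at w)"
    using partials_on_has_derivative_comp[OF assms(1) UNIV_I has_derivative_disc_chart[OF assms(2)]]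
    unfolding \<psi>'_def A_def B_def d_def x_def y_def by (simp only: fst_conv snd_conv)
  have v: "\<psi>' 1 = 2 * P / d^2" "\<psi>' \<i> = 2 * Q / d^2"
    unfolding \<psi>'_def P_def Q_def using \<open>d \<noteq> 0\<close> by (simp_all add: field_simps power2_eq_square)
  have num: "disc_partial D (Suc i) j w * (1 + w^2) + \<i> * disc_partial D i (Suc j) w * (1 - w^2)
      = of_real P + \<i> * of_real Q"
    unfolding disc_partial_def A_def[symmetric] B_def[symmetric] P_def Q_def
    by (simp add: complex_eq_iff d x_def y_def power2_eq_square algebra_simps)
  have den: "(1 - w * cnj w)^2 = of_real (d^2)"
    by (simp only: d_def of_real_power of_real_disc_weight)
  have "disc_partial D i j = (\<lambda>z. of_real (D i j (disc_chart z)))"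
    by (simp add: fun_eq_iff disc_partial_def)
  moreover have "has_dbar (\<lambda>z. of_real (D i j (disc_chart z))) w
      ((of_real P + \<i> * of_real Q) / of_real (d^2))"
    by (rule has_dbarI[OF has_derivative_of_real[OF deriv]])
      (simp del: of_real_power add: v complex_eq_iff Re_divide_of_real Im_divide_of_real)
  ultimately show ?thesis unfolding num den by simp
qed

lemma disc_chart_surj: "\<exists>w \<in> ball 0 1. disc_chart w = z"
proof -
  obtain p q where z: "z = (p, q)" by (cases z)
  define W where "W = sqrt (1 + p^2 + q^2)"
  have W2: "W^2 = 1 + p^2 + q^2" unfolding W_def by (simp add: add_nonneg_nonneg)
  have W1: "W \<ge> 1" unfolding W_def by (simp add: add_nonneg_nonneg)
  define w where "w = Complex (p / (1 + W)) (q / (1 + W))"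
  have n2: "(cmod w)^2 = (W - 1) / (W + 1)"
  proof -
    have "(cmod w)^2 = (p^2 + q^2) / (1 + W)^2"
      unfolding w_def cmod_power2 by (simp add: power_divide add_divide_distrib)
    also have "\<dots> = (W - 1) * (W + 1) / ((W + 1) * (W + 1))"
      using W2 by (simp add: algebra_simps power2_eq_square)
    also have "\<dots> = (W - 1) / (W + 1)"
      using W1 by simp
    finally show ?thesis .
  qed
  have "(cmod w)^2 < 1"
    using n2 W1 by simp
  then have "cmod w < 1"
    by (simp add: power_less_one_iff abs_square_less_1)
  moreover have weight: "1 - (cmod w)^2 = 2 / (W + 1)"
    unfolding n2 using W1 by (simp add: field_simps)
  have "disc_chart w = (p, q)"
    unfolding disc_chart_def weight unfolding w_def using W1 by (simp add: field_simps)
  ultimately show ?thesis using z by auto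
qed

lemma disc_chart_coordinates:
  assumes "w \<in> ball 0 1"
  shows "of_real (fst (disc_chart w)) * (1 - w * cnj w) = w + cnj w"
    and "of_real (snd (disc_chart w)) * (1 - w * cnj w) = - \<i> * (w - cnj w)"
proof -
  have d: "1 - (cmod w)^2 \<noteq> 0" using disc_weight_pos[OF assms] by simp
  show "of_real (fst (disc_chart w)) * (1 - w * cnj w) = w + cnj w"
    unfolding disc_chart_def of_real_disc_weight[symmetric] of_real_mult[symmetric]
    using d by (simp add: complex_add_cnj)
  show "of_real (snd (disc_chart w)) * (1 - w * cnj w) = - \<i> * (w - cnj w)"
    unfolding disc_chart_def of_real_disc_weight[symmetric] of_real_mult[symmetric]
    using d by (simp add: complex_eq_iff)
qed

section \<open>Unique continuation\<close>

definition hess_poly :: "partials \<Rightarrow> complex \<Rightarrow> complex" where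
  "hess_poly D w =
     (disc_partial D 2 0 w - disc_partial D 0 2 w + 2 * \<i> * disc_partial D 1 1 w)
     + 2 * w^2 * (disc_partial D 2 0 w + disc_partial D 0 2 w)
     + w^4 * (disc_partial D 2 0 w - disc_partial D 0 2 w - 2 * \<i> * disc_partial D 1 1 w)"

definition hess_form :: "partials \<Rightarrow> complex \<Rightarrow> complex" where
  "hess_form D w = cnj (hess_poly D w) / ((1 - w * cnj w)^3 * (1 + w * cnj w))"

lemma cnj_disc_partial [simp]: "cnj (disc_partial D i j w) = disc_partial D i j w"
  by (simp add: disc_partial_def)

text \<open>With \<open>v = cnj w\<close>, the left side is \<open>(1 - w v)^2 (1 + w v)\<close> times the dbar-derivative of
  the numerator of \<^const>\<open>hess_form\<close> and the right side is the numerator times the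
  dbar-derivative of its denominator. Their difference is a combination of the equation and
  its two derivatives, pulled back along \<^const>\<open>disc_chart\<close>.\<close>

lemma hess_form_quotient_identity:
  fixes w v p q a20 a11 a02 a30 a21 a12 a03 :: complex
  assumes p: "p * (1 - w * v) = w + v" and q: "q * (1 - w * v) = - \<i> * (w - v)"
    and pde: "(1 + p^2) * a20 + 2 * p * q * a11 + (1 + q^2) * a02 = 0"
    and pde_p: "2 * p * a20 + (1 + p^2) * a30 + 2 * q * a11 + 2 * p * q * a21 + (1 + q^2) * a12 = 0"
    and pde_q: "(1 + p^2) * a21 + 2 * p * a11 + 2 * p * q * a12 + 2 * q * a02 + (1 + q^2) * a03 = 0"
  shows "((a30 * (1 + w^2) + \<i> * a21 * (1 - w^2)) - (a12 * (1 + w^2) + \<i> * a03 * (1 - w^2))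
          - 2 * \<i> * (a21 * (1 + w^2) + \<i> * a12 * (1 - w^2))
        + 2 * v^2 * ((a30 * (1 + w^2) + \<i> * a21 * (1 - w^2)) + (a12 * (1 + w^2) + \<i> * a03 * (1 - w^2)))
        + v^4 * ((a30 * (1 + w^2) + \<i> * a21 * (1 - w^2)) - (a12 * (1 + w^2) + \<i> * a03 * (1 - w^2))
          + 2 * \<i> * (a21 * (1 + w^2) + \<i> * a12 * (1 - w^2)))
        + (1 - w * v)^2 * (4 * v * (a20 + a02) + 4 * v^3 * (a20 - a02 + 2 * \<i> * a11))) * (1 + w * v)
      = ((a20 - a02 - 2 * \<i> * a11) + 2 * v^2 * (a20 + a02) + v^4 * (a20 - a02 + 2 * \<i> * a11))
        * (1 - w * v) * w * ((1 - w * v) - 3 * (1 + w * v))"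
    (is "?lhs = ?rhs")
proof -
  let ?r = "1 - w * v" and ?p = "w + v" and ?q = "- \<i> * (w - v)"
  have i2: "\<i>^2 = -1" by simp
  have l0: "(?r^2 + ?p^2) * a20 + 2 * ?p * ?q * a11 + (?r^2 + ?q^2) * a02 = 0"
    (is "?l0 = 0") using pde p q by algebra
  have lp: "2 * ?p * ?r * a20 + (?r^2 + ?p^2) * a30 + 2 * ?q * ?r * a11 + 2 * ?p * ?q * a21
      + (?r^2 + ?q^2) * a12 = 0"
    (is "?lp = 0") using pde_p p q by algebra
  have lq: "(?r^2 + ?p^2) * a21 + 2 * ?p * ?r * a11 + 2 * ?p * ?q * a12 + 2 * ?q * ?r * a02
      + (?r^2 + ?q^2) * a03 = 0"
    (is "?lq = 0") using pde_q p q by algebra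
  have "?lhs - ?rhs = 2 * v * ?r * ?l0 + (1 + v^2) * (1 + w * v) * ?lp - \<i> * (1 - v^2) * (1 + w * v) * ?lq"
    using i2 by algebra
  then show ?thesis using l0 lp lq by simp
qed

lemma disc_partial_symmetry_pde:
  assumes "partials_on UNIV \<phi> D" "symmetry_pde D" "disc_chart w = (p, q)"
  shows "(1 + (of_real p)^2) * disc_partial D 2 0 w + 2 * of_real p * of_real q * disc_partial D 1 1 w
      + (1 + (of_real q)^2) * disc_partial D 0 2 w = 0"
    and "2 * of_real p * disc_partial D 2 0 w + (1 + (of_real p)^2) * disc_partial D 3 0 w
      + 2 * of_real q * disc_partial D 1 1 w + 2 * of_real p * of_real q * disc_partial D 2 1 w
      + (1 + (of_real q)^2) * disc_partial D 1 2 w = 0"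
    and "(1 + (of_real p)^2) * disc_partial D 2 1 w + 2 * of_real p * disc_partial D 1 1 w
      + 2 * of_real p * of_real q * disc_partial D 1 2 w + 2 * of_real q * disc_partial D 0 2 w
      + (1 + (of_real q)^2) * disc_partial D 0 3 w = 0"
  using arg_cong[OF assms(2)[unfolded symmetry_pde_def, rule_format, of p q], of complex_of_real]
    arg_cong[OF symmetry_pde_derivatives(1)[OF assms(1,2), of p q], of complex_of_real]
    arg_cong[OF symmetry_pde_derivatives(2)[OF assms(1,2), of p q], of complex_of_real]
  by (simp_all add: disc_partial_def assms(3))

lemma has_dbar_cnj_hess_poly:
  assumes D: "partials_on UNIV \<phi> D" "symmetry_pde D" and w: "w \<in> ball 0 1"
  obtains c where "has_dbar (\<lambda>z. cnj (hess_poly D z)) w (c / (1 - w * cnj w)^2)"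
    and "c * (1 + w * cnj w)
      = cnj (hess_poly D w) * (1 - w * cnj w) * w * ((1 - w * cnj w) - 3 * (1 + w * cnj w))"
proof -
  let ?a = "\<lambda>i j. disc_partial D i j w"
  obtain p q where pq: "disc_chart w = (p, q)" by (cases "disc_chart w")
  define r where "r = 1 - w * cnj w"
  define N where "N z = (disc_partial D 2 0 z - disc_partial D 0 2 z - 2 * \<i> * disc_partial D 1 1 z)
      + 2 * (cnj z)^2 * (disc_partial D 2 0 z + disc_partial D 0 2 z)
      + (cnj z)^4 * (disc_partial D 2 0 z - disc_partial D 0 2 z + 2 * \<i> * disc_partial D 1 1 z)"
    for z
  define c where "c =
      ((?a 3 0 * (1 + w^2) + \<i> * ?a 2 1 * (1 - w^2)) - (?a 1 2 * (1 + w^2) + \<i> * ?a 0 3 * (1 - w^2))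
          - 2 * \<i> * (?a 2 1 * (1 + w^2) + \<i> * ?a 1 2 * (1 - w^2))
        + 2 * (cnj w)^2 * ((?a 3 0 * (1 + w^2) + \<i> * ?a 2 1 * (1 - w^2))
          + (?a 1 2 * (1 + w^2) + \<i> * ?a 0 3 * (1 - w^2)))
        + (cnj w)^4 * ((?a 3 0 * (1 + w^2) + \<i> * ?a 2 1 * (1 - w^2))
          - (?a 1 2 * (1 + w^2) + \<i> * ?a 0 3 * (1 - w^2))
          + 2 * \<i> * (?a 2 1 * (1 + w^2) + \<i> * ?a 1 2 * (1 - w^2)))
        + r^2 * (4 * cnj w * (?a 2 0 + ?a 0 2) + 4 * (cnj w)^3 * (?a 2 0 - ?a 0 2 + 2 * \<i> * ?a 1 1)))"
  have "r \<noteq> 0" using disc_weight_complex_nonzero[OF w] unfolding r_def .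
  have N: "cnj (hess_poly D z) = N z" for z
    by (simp add: hess_poly_def N_def)
  have "has_dbar N w (c / (1 - w * cnj w)^2)"
    unfolding N_def[abs_def]
    apply (rule has_dbar_eq, (rule has_dbar_add has_dbar_diff has_dbar_mult has_dbar_power
        has_dbar_const has_dbar_cnj has_dbar_disc_partial[OF D(1) w])+)
    unfolding c_def r_def[symmetric] using \<open>r \<noteq> 0\<close>
    by (simp add: field_simps numeral_2_eq_2 numeral_3_eq_3)
  moreover have "c * (1 + w * cnj w) = N w * (1 - w * cnj w) * w * ((1 - w * cnj w) - 3 * (1 + w * cnj w))"
    unfolding c_def N_def r_def
    by (rule hess_form_quotient_identity[OF disc_chart_coordinates[OF w, unfolded pq fst_conv snd_conv]
        disc_partial_symmetry_pde[OF D pq]])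
  ultimately show thesis by (intro that) (simp_all add: N)
qed

lemma has_dbar_disc_denominator:
  "has_dbar (\<lambda>z. (1 - z * cnj z)^3 * (1 + z * cnj z)) w
    ((1 - w * cnj w)^2 * w * ((1 - w * cnj w) - 3 * (1 + w * cnj w)))"
  apply (rule has_dbar_eq, (rule has_dbar_diff has_dbar_add has_dbar_mult has_dbar_power
      has_dbar_const has_dbar_cnj has_dbar_ident)+)
  by (simp add: algebra_simps power2_eq_square power3_eq_cube)

lemma has_dbar_hess_form:
  assumes "partials_on UNIV \<phi> D" "symmetry_pde D" "w \<in> ball 0 1"
  shows "has_dbar (hess_form D) w 0"
proof -
  define r where "r = 1 - w * cnj w"
  define s where "s = 1 + w * cnj w"
  obtain c where dN: "has_dbar (\<lambda>z. cnj (hess_poly D z)) w (c / r^2)"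
    and cancel: "c * s = cnj (hess_poly D w) * r * w * (r - 3 * s)"
    using has_dbar_cnj_hess_poly[OF assms] unfolding r_def s_def by blast
  have "r \<noteq> 0" "s \<noteq> 0"
    using disc_weight_complex_nonzero[OF assms(3)] one_plus_norm_square_nonzero[of w]
    unfolding r_def s_def by simp_all
  have "(c / r^2) * (r^3 * s) - cnj (hess_poly D w) * (r^2 * w * (r - 3 * s))
      = r * (c * s - cnj (hess_poly D w) * r * w * (r - 3 * s))"
    using \<open>r \<noteq> 0\<close> by (simp add: field_simps power2_eq_square power3_eq_cube)
  then have "(c / r^2) * (r^3 * s) - cnj (hess_poly D w) * (r^2 * w * (r - 3 * s)) = 0"
    by (simp add: cancel)
  then show ?thesis
    using has_dbar_divide[OF dN has_dbar_disc_denominator[of w, folded r_def s_def]]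
      \<open>r \<noteq> 0\<close> \<open>s \<noteq> 0\<close>
    unfolding hess_form_def[abs_def] r_def s_def by simp
qed

definition grad_form :: "partials \<Rightarrow> complex \<Rightarrow> complex" where
  "grad_form D w = - w * disc_partial D 0 0 w
     + ((disc_partial D 1 0 w + \<i> * disc_partial D 0 1 w)
        + w^2 * (disc_partial D 1 0 w - \<i> * disc_partial D 0 1 w)) / (1 - w * cnj w)"

lemma has_dbar_grad_form:
  assumes "partials_on UNIV \<phi> D" "w \<in> ball 0 1"
  shows "has_dbar (grad_form D) w (hess_poly D w / (1 - w * cnj w)^3)"
proof -
  define r where "r = 1 - w * cnj w"
  have "r \<noteq> 0" using disc_weight_complex_nonzero[OF assms(2)] unfolding r_def .
  show ?thesis
    unfolding grad_form_def[abs_def]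
    apply (rule has_dbar_eq, (rule has_dbar_add has_dbar_diff has_dbar_mult has_dbar_minus
        has_dbar_power has_dbar_const has_dbar_cnj has_dbar_ident has_dbar_disc_partial[OF assms]
        has_dbar_divide)+)
    using \<open>r \<noteq> 0\<close> unfolding hess_poly_def r_def[symmetric]
     apply (simp_all add: field_simps numeral_2_eq_2)
    apply algebra
    done
qed

lemma has_dbar_weighted_pullback:
  assumes "partials_on UNIV \<phi> D" "w \<in> ball 0 1"
  shows "has_dbar (\<lambda>z. of_real ((1 - (cmod z)^2) * D 0 0 (disc_chart z))) w (grad_form D w)"
proof -
  define r where "r = 1 - w * cnj w"
  have "r \<noteq> 0" using disc_weight_complex_nonzero[OF assms(2)] unfolding r_def .
  have "(\<lambda>z. of_real ((1 - (cmod z)^2) * D 0 0 (disc_chart z))) =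
      (\<lambda>z. (1 - z * cnj z) * disc_partial D 0 0 z)"
    by (simp only: disc_partial_def of_real_mult of_real_disc_weight)
  then show ?thesis
    apply (simp only:)
    apply (rule has_dbar_eq, (rule has_dbar_diff has_dbar_mult has_dbar_const has_dbar_cnj
        has_dbar_ident has_dbar_disc_partial[OF assms])+)
    using \<open>r \<noteq> 0\<close> unfolding grad_form_def r_def[symmetric]
    by (simp add: field_simps power2_eq_square)
qed

lemma has_derivative_disc_weight:
  "((\<lambda>z. 1 - (cmod z)^2) has_derivative (\<lambda>h. - 2 * (Re w * Re h + Im w * Im h))) (at w)"
proof -
  have "(\<lambda>z. 1 - (cmod z)^2) = (\<lambda>z. 1 - (Re z)^2 - (Im z)^2)"
    by (simp add: fun_eq_iff cmod_power2)
  then show ?thesis by (auto intro!: derivative_eq_intros simp: algebra_simps)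
qed

lemma grad_form_vanishes:
  assumes D: "partials_on UNIV \<phi> D" "symmetry_pde D"
    and S: "open S" "S \<noteq> {}" "S \<subseteq> ball 0 1" "\<And>z i j. z \<in> S \<Longrightarrow> D i j (disc_chart z) = 0"
    and w: "w \<in> ball 0 1"
  shows "grad_form D w = 0"
proof -
  have continuation: "f w = 0"
    if "f holomorphic_on ball 0 1" "\<And>z. z \<in> S \<Longrightarrow> f z = 0" "w \<in> ball 0 1" for f w
    using analytic_continuation_open[OF S(1) open_ball S(2) connected_ball S(3) that(1)
        holomorphic_on_const, of 0] that(2,3) by blast
  have hess_form: "hess_form D w = 0" if "w \<in> ball 0 1" for w
  proof (rule continuation[OF _ _ that])
    show "hess_form D holomorphic_on ball 0 1"
      using has_dbar_hess_form[OF D] by (rule has_dbar_zero_imp_holomorphic_on)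
    show "hess_form D z = 0" if "z \<in> S" for z
      using S(4)[OF that] by (simp add: hess_form_def hess_poly_def disc_partial_def)
  qed
  have hess_poly: "hess_poly D w = 0" if "w \<in> ball 0 1" for w
    using hess_form[OF that] disc_weight_complex_nonzero[OF that] one_plus_norm_square_nonzero[of w]
    by (simp add: hess_form_def)
  show ?thesis
  proof (rule continuation[OF _ _ w])
    show "grad_form D holomorphic_on ball 0 1"
      using has_dbar_grad_form[OF D(1)] hess_poly by (intro has_dbar_zero_imp_holomorphic_on) simp
    show "grad_form D z = 0" if "z \<in> S" for z
      using S(4)[OF that] by (simp add: grad_form_def disc_partial_def)
  qed
qed

lemma vanishes_if_grad_form_vanishes:
  assumes D: "partials_on UNIV \<phi> D" and grad: "\<And>w. w \<in> ball 0 1 \<Longrightarrow> grad_form D w = 0"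
    and w0: "w0 \<in> ball 0 1" "D 0 0 (disc_chart w0) = 0"
  shows "D 0 0 z = 0"
proof -
  define k where "k z = (1 - (cmod z)^2) * D 0 0 (disc_chart z)" for z
  have "(k has_derivative (\<lambda>h. 0)) (at w within ball 0 1)" if w: "w \<in> ball 0 1" for w
  proof -
    obtain k' where k': "(k has_derivative k') (at w)"
      using has_derivative_mult[OF has_derivative_disc_weight partials_on_has_derivative_comp[OF D
            UNIV_I has_derivative_disc_chart[OF w]]]
      unfolding k_def by blast
    have "has_dbar (\<lambda>z. of_real (k z)) w 0"
      using has_dbar_weighted_pullback[OF D w] grad[OF w] unfolding k_def by simp
    then show ?thesis
      using has_dbar_of_real_zero_imp_has_derivative_zero[OF k'] has_derivative_at_withinI by blast
  qed
  then obtain c where c: "\<And>w. w \<in> ball 0 1 \<Longrightarrow> k w = c"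
    using has_derivative_zero_constant[OF convex_ball] by blast
  obtain w where w: "w \<in> ball 0 1" "disc_chart w = z"
    using disc_chart_surj by blast
  have "k w = 0"
    using c[OF w(1)] c[OF w0(1)] w0(2) unfolding k_def by simp
  then show ?thesis
    using disc_weight_pos[OF w(1)] w(2) unfolding k_def by simp
qed

lemma symmetry_pde_unique_continuation:
  assumes D: "partials_on UNIV \<phi> D" "symmetry_pde D"
    and V: "open V" "V \<noteq> {}" "\<And>z. z \<in> V \<Longrightarrow> \<phi> z = 0"
  shows "\<phi> z = 0"
proof -
  define S where "S = ball 0 1 \<inter> disc_chart -` V"
  have "open S"
    using continuous_on_open_vimage[OF open_ball] continuous_on_disc_chart V(1)
    unfolding S_def by (metis Int_commute)
  obtain z0 where "z0 \<in> V" using V(2) by blast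
  then obtain w0 where w0: "w0 \<in> ball 0 1" "disc_chart w0 \<in> V"
    using disc_chart_surj[of z0] by auto
  then have "S \<noteq> {}" "S \<subseteq> ball 0 1" unfolding S_def by auto
  have vanish: "D i j z = 0" if "z \<in> V" for i j z
    using partials_on_vanish[OF D(1) V(1) subset_UNIV V(3) that] .
  have "grad_form D w = 0" if "w \<in> ball 0 1" for w
    using grad_form_vanishes[OF D \<open>open S\<close> \<open>S \<noteq> {}\<close> \<open>S \<subseteq> ball 0 1\<close> _ that] vanish
    unfolding S_def by blast
  then have "D 0 0 z = 0"
    using vanishes_if_grad_form_vanishes[OF D(1) _ w0(1) vanish[OF w0(2)]] by blast
  then show ?thesis using partials_on_eq[OF D(1), of z] by simp
qed

section \<open>Invariant minimal graphs\<close>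

lemma MSE_hessian_nondegenerate:
  assumes "MSE p q r s t = 0" "\<not> (r = 0 \<and> s = 0 \<and> t = 0)"
  shows "r * t - s^2 \<noteq> 0"
proof
  assume det: "r * t - s^2 = 0"
  have "r * MSE p q r s t = r^2 + s^2 + (q * r - p * s)^2 + (1 + p^2) * (r * t - s^2)"
    unfolding MSE_def by (simp add: algebra_simps power2_eq_square)
  then have "r^2 + s^2 + (q * r - p * s)^2 = 0"
    using assms(1) det by simp
  then have "r = 0" "s = 0"
    by (smt (verit) zero_le_power2 power_eq_0_iff)+
  moreover have "1 + p^2 \<noteq> 0"
    by (smt (verit) zero_le_power2)
  ultimately show False
    using assms unfolding MSE_def by simp
qed

lemma affine_if_hessian_vanishes:
  assumes G: "partials_on \<Omega> u G" and \<Omega>: "open \<Omega>" "connected \<Omega>"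
    and hess: "\<And>z. z \<in> \<Omega> \<Longrightarrow> G 2 0 z = 0 \<and> G 1 1 z = 0 \<and> G 0 2 z = 0"
  shows "\<exists>a b c. \<forall>x y. (x, y) \<in> \<Omega> \<longrightarrow> u (x, y) = a * x + b * y + c"
proof (cases "\<Omega> = {}")
  case False
  then obtain z0 where z0: "z0 \<in> \<Omega>" by blast
  define grad where "grad z = (G 1 0 z, G 0 1 z)" for z
  have "(grad has_derivative (\<lambda>h. 0)) (at z)" if "z \<in> \<Omega>" for z
    using has_derivative_Pair[OF partials_on_has_derivative[OF G that, of 1 0]
        partials_on_has_derivative[OF G that, of 0 1]] hess[OF that]
    unfolding grad_def by (simp add: case_prod_beta zero_prod_def numeral_2_eq_2)
  then have grad: "grad z = grad z0" if "z \<in> \<Omega>" for z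
    using has_derivative_zero_unique_connected[OF \<Omega>] that z0 by blast
  define a where "a = G 1 0 z0"
  define b where "b = G 0 1 z0"
  define r where "r z = u z - a * fst z - b * snd z" for z
  have "(r has_derivative (\<lambda>h. 0)) (at z)" if "z \<in> \<Omega>" for z
  proof -
    have "(G 0 0 has_derivative (\<lambda>(h, k). a * h + b * k)) (at z)"
      using partials_on_has_derivative[OF G that, of 0 0] grad[OF that]
      unfolding grad_def a_def b_def by simp
    then have "(u has_derivative (\<lambda>(h, k). a * h + b * k)) (at z)"
      by (rule has_derivative_transform_within_open[OF _ \<Omega>(1) that])
        (use partials_on_eq[OF G] in simp)
    then show ?thesis
      unfolding r_def by (auto intro!: derivative_eq_intros simp: case_prod_beta)
  qed
  then have "r z = r z0" if "z \<in> \<Omega>" for z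
    using has_derivative_zero_unique_connected[OF \<Omega>] that z0 by blast
  then have "u (x, y) = a * x + b * y + r z0" if "(x, y) \<in> \<Omega>" for x y
    using that unfolding r_def by force
  then show ?thesis by blast
qed simp

lemma gradient_image_interior_nonempty:
  assumes G: "partials_on \<Omega> u G" and "open \<Omega>" "z0 \<in> \<Omega>"
    and det: "G 2 0 z0 * G 0 2 z0 - (G 1 1 z0)^2 \<noteq> 0"
  shows "interior ((\<lambda>z. (G 1 0 z, G 0 1 z)) ` \<Omega>) \<noteq> {}"
proof -
  define grad where "grad z = (G 1 0 z, G 0 1 z)" for z
  define hess where "hess z v = (G 2 0 z * fst v + G 1 1 z * snd v, G 1 1 z * fst v + G 0 2 z * snd v)"
    for z and v :: "real \<times> real"
  have deriv: "(grad has_derivative hess z) (at z)" if "z \<in> \<Omega>" for z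
    using has_derivative_Pair[OF partials_on_has_derivative[OF G that, of 1 0]
        partials_on_has_derivative[OF G that, of 0 1]]
    unfolding grad_def hess_def by (simp add: case_prod_beta numeral_2_eq_2)
  have "linear (hess z0)"
    unfolding hess_def by (rule linearI) (auto simp: algebra_simps)
  moreover have "inj (hess z0)"
  proof -
    let ?r = "G 2 0 z0" and ?s = "G 1 1 z0" and ?t = "G 0 2 z0"
    have "v = 0" if "hess z0 v = 0" for v
    proof -
      have e: "?r * fst v + ?s * snd v = 0" "?s * fst v + ?t * snd v = 0"
        using that unfolding hess_def by (simp_all add: prod_eq_iff)
      have "(?r * ?t - ?s^2) * fst v = ?t * (?r * fst v + ?s * snd v) - ?s * (?s * fst v + ?t * snd v)"
        "(?r * ?t - ?s^2) * snd v = ?r * (?s * fst v + ?t * snd v) - ?s * (?r * fst v + ?s * snd v)"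
        by (simp_all add: algebra_simps power2_eq_square)
      then have "(?r * ?t - ?s^2) * fst v = 0" "(?r * ?t - ?s^2) * snd v = 0"
        by (simp_all only: e mult_zero_right diff_zero)
      then show ?thesis using det by (simp add: prod_eq_iff)
    qed
    then show ?thesis using linear_inj_iff_eq_0[OF \<open>linear (hess z0)\<close>] by blast
  qed
  ultimately obtain inv where "linear inv" "\<And>v. hess z0 (inv v) = v"
    using linear_injective_isomorphism by blast
  then have "bounded_linear inv" "hess z0 \<circ> inv = id"
    by (simp_all add: linear_conv_bounded_linear fun_eq_iff)
  moreover have "continuous_on \<Omega> grad"
    using deriv by (meson continuous_at_imp_continuous_on has_derivative_continuous)
  ultimately have "grad z0 \<in> interior (grad ` \<Omega>)"
    using sussmann_open_mapping[OF \<open>open \<Omega>\<close> _ \<open>z0 \<in> \<Omega>\<close> deriv[OF \<open>z0 \<in> \<Omega>\<close>]]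
    by (simp add: interior_open \<open>open \<Omega>\<close> \<open>z0 \<in> \<Omega>\<close>)
  then show ?thesis unfolding grad_def by blast
qed

theorem proposition8:
  fixes \<phi> :: "real \<times> real \<Rightarrow> real"
    and u :: "real \<times> real \<Rightarrow> real"
    and \<Omega> :: "(real \<times> real) set"
  assumes "smooth_on_R2 UNIV \<phi>"
    and "is_MSE_symmetry \<phi>"
    and "\<exists>z. \<phi> z \<noteq> 0"
    and "open \<Omega>" and "connected \<Omega>"
    and "smooth_on_R2 \<Omega> u"
    and "\<forall>z\<in>\<Omega>. MSE (dP u z) (dQ u z) (dP (dP u) z) (dQ (dP u) z) (dQ (dQ u) z) = 0"
    and "\<forall>z\<in>\<Omega>. \<phi> (dP u z, dQ u z) = 0"
  shows "\<exists>a b c. \<forall>x y. (x, y) \<in> \<Omega> \<longrightarrow> u (x, y) = a * x + b * y + c"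
proof -
  obtain F where F: "partials_on UNIV \<phi> F" using assms(1) smooth_on_R2_iff_partials_on by blast
  obtain G where G: "partials_on \<Omega> u G" using assms(6) smooth_on_R2_iff_partials_on by blast
  have pde: "symmetry_pde F" using is_MSE_symmetry_imp_symmetry_pde[OF F assms(2)] .
  note second = partials_on_second_order[OF G assms(4)]
  show ?thesis
  proof (rule ccontr)
    assume "\<not> ?thesis"
    then obtain z0 where z0: "z0 \<in> \<Omega>" and "\<not> (G 2 0 z0 = 0 \<and> G 1 1 z0 = 0 \<and> G 0 2 z0 = 0)"
      using affine_if_hessian_vanishes[OF G assms(4,5)] by blast
    moreover have "MSE (G 1 0 z0) (G 0 1 z0) (G 2 0 z0) (G 1 1 z0) (G 0 2 z0) = 0"
      using bspec[OF assms(7) z0] unfolding second[OF z0] .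
    ultimately have "G 2 0 z0 * G 0 2 z0 - (G 1 1 z0)^2 \<noteq> 0"
      using MSE_hessian_nondegenerate by blast
    then have "interior ((\<lambda>z. (G 1 0 z, G 0 1 z)) ` \<Omega>) \<noteq> {}"
      using gradient_image_interior_nonempty[OF G assms(4) z0] by blast
    moreover have "\<phi> z = 0" if "z \<in> (\<lambda>z. (G 1 0 z, G 0 1 z)) ` \<Omega>" for z
      using that assms(8) second by auto
    ultimately have "\<phi> z = 0" for z
      using symmetry_pde_unique_continuation[OF F pde open_interior] interior_subset by blast
    with assms(3) show False by blast
  qed
qed

end
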